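(* Let $S$ be a self-adjoint subspace in $X^2$, and let $A$ and $S+A$ be closed Hermitian subspaces in $X^2$, with $D(S)\subset D(A)$. Let $Q:A(0)^\perp\to S(0)^\perp$ be the orthogonal projection (under these hypotheses $A(0)\subset S(0)$, so $S(0)^\perp\subset A(0)^\perp$). If $QA_s$ is $S_s$-bounded with $S_s$-bound less than $1$, then $S+A$ is a self-adjoint subspace in $X^2$.
   Context: $X$ is a complex Hilbert space and $X^2=X\times X$ carries the inner product $\langle (x,f),(y,g)\rangle=\langle x,y\rangle+\langle f,g\rangle$. A subspace $T$ in $X^2$ means a linear subspace of $X^2$ (a linear relation); a linear operator in $X$ is identified with its graph. Notation: $D(T)=\{x:(x,f)\in T \text{ for some } f\}$, $T(x)=\{f:(x,f)\in T\}$. The adjoint is $T^*=\{(y,g)\in X^2:\langle g,x\rangle=\langle y,f\rangle \text{ for all }(x,f)\in T\}$; $T$ is Hermitian if $T\subset T^*$ and self-adjoint if $T=T^*$. For subspaces $S,A$ in $X^2$, $S+A=\{(x,f+g):(x,f)\in S,(x,g)\in A\}$. For a closed subspace $T$, set $T_\infty=\{(0,g)\in X^2:(0,g)\in T\}$ and $T_s=T\ominus T_\infty$ (orthogonal complement of $T_\infty$ in $T$), so $T=T_s\oplus T_\infty$; $T_s$ is the graph of a linear operator (the operator part of $T$) with $D(T_s)=D(T)$ and $R(T_s)\subset T(0)^\perp$. For linear operators $U,V$ in $X$: $U$ is $V$-bounded if $D(V)\subset D(U)$ and there is $c\ge0$ with $\|Ux\|\le c(\|x\|+\|Vx\|)$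 for $x\in D(V)$; the $V$-bound of $U$ is the infimum of all $a\ge 0$ for which some $b\ge0$ satisfies $\|Ux\|\le a\|Vx\|+b\|x\|$ for all $x\in D(V)$. *)

theory Defs
  imports "HOL-Analysis.Analysis"
begin

text \<open>A complex Hilbert space: a real inner product space that is complete, equipped with
  a complex scalar multiplication and a complex inner product (linear in the first argument,
  conjugate symmetric) whose real part is the underlying real inner product.  Hence the norm
  is the one induced by the complex inner product.\<close>

class chilbert = real_inner + complete_space +
  fixes scaleC :: "complex \<Rightarrow> 'a \<Rightarrow> 'a" (infixr \<open>*\<^sub>C\<close> 75)
    and cinner :: "'a \<Rightarrow> 'a \<Rightarrow> complex"
  assumes scaleC_add_right: "c *\<^sub>C (x + y) = c *\<^sub>C x + c *\<^sub>C y"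
    and scaleC_add_left: "(b + c) *\<^sub>C x = b *\<^sub>C x + c *\<^sub>C x"
    and scaleC_scaleC: "b *\<^sub>C (c *\<^sub>C x) = (b * c) *\<^sub>C x"
    and scaleC_one: "1 *\<^sub>C x = x"
    and scaleC_of_real: "complex_of_real r *\<^sub>C x = r *\<^sub>R x"
    and cinner_add_left: "cinner (x + y) z = cinner x z + cinner y z"
    and cinner_scaleC_left: "cinner (c *\<^sub>C x) y = c * cinner x y"
    and cinner_commute: "cinner y x = cnj (cinner x y)"
    and Re_cinner: "Re (cinner x y) = inner x y"

definition lin_rel :: "('a::chilbert \<times> 'a) set \<Rightarrow> bool" where
  "lin_rel T \<longleftrightarrow> (0, 0) \<in> T
     \<and> (\<forall>x f y g. (x, f) \<in> T \<and> (y, g) \<in> T \<longrightarrow> (x + y, f + g) \<in> T)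
     \<and> (\<forall>c x f. (x, f) \<in> T \<longrightarrow> (c *\<^sub>C x, c *\<^sub>C f) \<in> T)"

definition rdom :: "('a \<times> 'a) set \<Rightarrow> 'a set" where
  "rdom T = {x. \<exists>f. (x, f) \<in> T}"

definition rimg :: "('a \<times> 'a) set \<Rightarrow> 'a \<Rightarrow> 'a set" where
  "rimg T x = {f. (x, f) \<in> T}"

definition radj :: "('a::chilbert \<times> 'a) set \<Rightarrow> ('a \<times> 'a) set" where
  "radj T = {(y, g). \<forall>x f. (x, f) \<in> T \<longrightarrow> cinner g x = cinner y f}"

definition hermitian_rel :: "('a::chilbert \<times> 'a) set \<Rightarrow> bool" where
  "hermitian_rel T \<longleftrightarrow> T \<subseteq> radj T"

definition selfadjoint_rel :: "('a::chilbert \<times> 'a) set \<Rightarrow> bool" where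
  "selfadjoint_rel T \<longleftrightarrow> T = radj T"

definition rsum :: "('a::chilbert \<times> 'a) set \<Rightarrow> ('a \<times> 'a) set \<Rightarrow> ('a \<times> 'a) set" where
  "rsum S A = {(x, f + g) | x f g. (x, f) \<in> S \<and> (x, g) \<in> A}"

definition corth :: "'a::chilbert set \<Rightarrow> 'a set" where
  "corth M = {y. \<forall>x\<in>M. cinner x y = 0}"

text \<open>T_infinity = {(0,g) in T}; T_s = T minus T_infinity (orthogonal complement in X^2,
  with the inner product <(x,f),(y,g)> = <x,y> + <f,g>), written out.\<close>
definition rinf :: "('a::chilbert \<times> 'a) set \<Rightarrow> ('a \<times> 'a) set" where
  "rinf T = {(0, g) | g. (0, g) \<in> T}"

definition rsing :: "('a::chilbert \<times> 'a) set \<Rightarrow> ('a \<times> 'a) set" where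
  "rsing T = {(x, f) \<in> T. \<forall>y g. (y, g) \<in> rinf T \<longrightarrow> cinner x y + cinner f g = 0}"

text \<open>The operator part T_s as a function on D(T) (its graph is rsing T).\<close>
definition opart :: "('a::chilbert \<times> 'a) set \<Rightarrow> 'a \<Rightarrow> 'a" where
  "opart T x = (THE f. (x, f) \<in> rsing T)"

definition cproj :: "'a::chilbert set \<Rightarrow> 'a \<Rightarrow> 'a" where
  "cproj M x = (THE y. y \<in> M \<and> (\<forall>z\<in>M. cinner (x - y) z = 0))"

definition rel_bounded :: "('a::chilbert \<Rightarrow> 'a) \<Rightarrow> 'a set \<Rightarrow> ('a \<Rightarrow> 'a) \<Rightarrow> 'a set \<Rightarrow> bool" where
  "rel_bounded U DU V DV \<longleftrightarrow> DV \<subseteq> DU \<and>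
     (\<exists>c\<ge>0. \<forall>x\<in>DV. norm (U x) \<le> c * (norm x + norm (V x)))"

definition rel_bound :: "('a::chilbert \<Rightarrow> 'a) \<Rightarrow> ('a \<Rightarrow> 'a) \<Rightarrow> 'a set \<Rightarrow> real" where
  "rel_bound U V DV = Inf {a. a \<ge> 0 \<and>
     (\<exists>b\<ge>0. \<forall>x\<in>DV. norm (U x) \<le> a * norm (V x) + b * norm x)}"

end

theory Submission
  imports Defs
begin

text \<open>For purely imaginary \<open>c \<noteq> 0\<close> the relation \<open>S - c\<close> is onto, and for \<open>(x, f) \<in> S\<close> both
  \<open>\<parallel>S\<^sub>s x\<parallel>\<close> and \<open>|c| \<parallel>x\<parallel>\<close> are at most \<open>\<parallel>f - c x\<parallel>\<close>. Hence, for \<open>|c|\<close> large, \<open>Q A\<^sub>s\<close> is a small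
  perturbation of \<open>S - c\<close>, and a contraction argument shows that \<open>S + A - c\<close> is onto; the remaining
  component \<open>(I - Q) A\<^sub>s x\<close> is orthogonal to \<open>D(S)\<close> and is absorbed by \<open>S(0)\<close>. A Hermitian relation
  \<open>T\<close> for which \<open>T - c\<close> and \<open>T - cnj c\<close> are onto is self-adjoint.\<close>

section \<open>The complex inner product\<close>

lemma scaleC_zero_right [simp]: "c *\<^sub>C (0::'a::chilbert) = 0"
  using scaleC_add_right[of c "0::'a" 0] by simp

lemma scaleC_minus_right: "c *\<^sub>C (- x::'a::chilbert) = - (c *\<^sub>C x)"
  using scaleC_add_right[of c x "-x"] by (simp add: eq_neg_iff_add_eq_0 add.commute)

lemma scaleC_diff_right: "c *\<^sub>C (x - y::'a::chilbert) = c *\<^sub>C x - c *\<^sub>C y"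
  by (metis scaleC_add_right scaleC_minus_right diff_conv_add_uminus)

lemma scaleC_minus_one: "(-1::complex) *\<^sub>C (x::'a::chilbert) = - x"
  using scaleC_of_real[of "-1" x] by simp

lemma scaleC_scaleR: "c *\<^sub>C (r *\<^sub>R (x::'a::chilbert)) = r *\<^sub>R (c *\<^sub>C x)"
  by (metis scaleC_of_real scaleC_scaleC mult.commute)

lemma cinner_zero_left [simp]: "cinner (0::'a::chilbert) y = 0"
  using cinner_scaleC_left[of 0 "0::'a" y] by simp

lemma cinner_zero_right [simp]: "cinner (y::'a::chilbert) 0 = 0"
  using cinner_commute[of y 0] by simp

lemma cinner_minus_left: "cinner (- x::'a::chilbert) y = - cinner x y"
  using cinner_add_left[of x "-x" y] by (simp add: eq_neg_iff_add_eq_0 add.commute)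

lemma cinner_diff_left: "cinner (x - y::'a::chilbert) z = cinner x z - cinner y z"
  by (metis cinner_add_left cinner_minus_left diff_conv_add_uminus)

lemma cinner_add_right: "cinner (z::'a::chilbert) (x + y) = cinner z x + cinner z y"
  by (metis cinner_add_left cinner_commute complex_cnj_add)

lemma cinner_diff_right: "cinner (z::'a::chilbert) (x - y) = cinner z x - cinner z y"
  by (metis cinner_diff_left cinner_commute complex_cnj_diff)

lemma cinner_scaleC_right: "cinner (x::'a::chilbert) (c *\<^sub>C y) = cnj c * cinner x y"
  by (metis cinner_scaleC_left cinner_commute complex_cnj_mult)

lemma cinner_self: "cinner (x::'a::chilbert) x = complex_of_real ((norm x)\<^sup>2)"
proof -
  have "cnj (cinner x x) = cinner x x"
    using cinner_commute[of x x] by simp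
  then have "Im (cinner x x) = 0"
    by (metis Reals_cnj_iff complex_is_Real_iff)
  then show ?thesis
    by (simp add: complex_eq_iff Re_cinner power2_norm_eq_inner)
qed

lemma cinner_self_eq_0 [simp]: "cinner (x::'a::chilbert) x = 0 \<longleftrightarrow> x = 0"
  by (simp add: cinner_self)

lemma norm_add_sq:
  "(norm (x + y::'a::chilbert))\<^sup>2 = (norm x)\<^sup>2 + (norm y)\<^sup>2 + 2 * Re (cinner x y)"
  by (simp add: Re_cinner power2_norm_eq_inner inner_add inner_commute)

lemma norm_diff_sq:
  "(norm (x - y::'a::chilbert))\<^sup>2 = (norm x)\<^sup>2 + (norm y)\<^sup>2 - 2 * Re (cinner x y)"
  by (simp add: Re_cinner power2_norm_eq_inner inner_diff inner_commute)

lemma norm_scaleC: "norm (c *\<^sub>C (x::'a::chilbert)) = cmod c * norm x"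
proof -
  have "cinner (c *\<^sub>C x) (c *\<^sub>C x) = c * cnj c * cinner x x"
    by (simp add: cinner_scaleC_left cinner_scaleC_right)
  then have "complex_of_real ((norm (c *\<^sub>C x))\<^sup>2) = complex_of_real ((cmod c)\<^sup>2 * (norm x)\<^sup>2)"
    by (simp only: cinner_self complex_norm_square of_real_mult)
  then have "(norm (c *\<^sub>C x))\<^sup>2 = (cmod c * norm x)\<^sup>2"
    by (simp only: of_real_eq_iff power_mult_distrib)
  then show ?thesis
    by (simp add: power2_eq_iff_nonneg)
qed

lemma bounded_linear_scaleC: "bounded_linear (\<lambda>x::'a::chilbert. c *\<^sub>C x)"
  by (rule bounded_linear_intro[where K="cmod c"])
    (auto simp: scaleC_add_right scaleC_scaleR norm_scaleC)

lemma cinner_eq_Complex_inner: "cinner (x::'a::chilbert) y = Complex (inner x y) (inner x (\<i> *\<^sub>C y))"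
  by (simp add: complex_eq_iff cinner_scaleC_right flip: Re_cinner)

lemma tendsto_cinner [tendsto_intros]:
  fixes f g :: "'b \<Rightarrow> 'a::chilbert"
  assumes "(f \<longlongrightarrow> a) F" "(g \<longlongrightarrow> b) F"
  shows "((\<lambda>t. cinner (f t) (g t)) \<longlongrightarrow> cinner a b) F"
proof -
  have "((\<lambda>t. \<i> *\<^sub>C g t) \<longlongrightarrow> \<i> *\<^sub>C b) F"
    using bounded_linear.tendsto[OF bounded_linear_scaleC assms(2)] .
  then have "((\<lambda>t. Complex (inner (f t) (g t)) (inner (f t) (\<i> *\<^sub>C g t)))
      \<longlongrightarrow> Complex (inner a b) (inner a (\<i> *\<^sub>C b))) F"
    by (intro tendsto_Complex tendsto_inner assms)
  then show ?thesis
    by (simp add: cinner_eq_Complex_inner)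
qed

lemma continuous_on_cinner [continuous_intros]:
  fixes f g :: "'b::topological_space \<Rightarrow> 'a::chilbert"
  shows "continuous_on s f \<Longrightarrow> continuous_on s g \<Longrightarrow> continuous_on s (\<lambda>t. cinner (f t) (g t))"
  unfolding continuous_on_def by (auto intro: tendsto_cinner)


section \<open>Orthogonal projections\<close>

lemma Cauchy_if_dist_sq_le:
  fixes y :: "nat \<Rightarrow> 'a::metric_space"
  assumes g: "g \<longlonglongrightarrow> 0" and le: "\<And>m n. (dist (y m) (y n))\<^sup>2 \<le> g m + g n"
  shows "Cauchy y"
proof (rule metric_CauchyI)
  fix \<epsilon> :: real
  assume "\<epsilon> > 0"
  then have "\<forall>\<^sub>F n in sequentially. g n < \<epsilon>\<^sup>2 / 2"
    using g \<open>\<epsilon> > 0\<close> by (intro order_tendstoD) auto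
  then obtain N where N: "\<And>n. n \<ge> N \<Longrightarrow> g n < \<epsilon>\<^sup>2 / 2"
    unfolding eventually_sequentially by blast
  have "dist (y m) (y n) < \<epsilon>" if "m \<ge> N" "n \<ge> N" for m n
  proof -
    have "(dist (y m) (y n))\<^sup>2 < \<epsilon>\<^sup>2"
      using le[of m n] N[OF \<open>m \<ge> N\<close>] N[OF \<open>n \<ge> N\<close>] by linarith
    then show ?thesis
      using \<open>\<epsilon> > 0\<close> by (simp add: power_less_imp_less_base)
  qed
  then show "\<exists>N. \<forall>m\<ge>N. \<forall>n\<ge>N. dist (y m) (y n) < \<epsilon>"
    by blast
qed

lemma parallelogram_dist_sq_le:
  fixes v y z :: "'a::real_inner"
  assumes "d \<le> norm (v - (1/2) *\<^sub>R (y + z))" "0 \<le> d"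
  shows "(dist y z)\<^sup>2 \<le> 2 * (norm (v - y))\<^sup>2 + 2 * (norm (v - z))\<^sup>2 - 4 * d\<^sup>2"
proof -
  have "(v - y) + (v - z) = 2 *\<^sub>R (v - (1/2) *\<^sub>R (y + z))"
    by (simp add: algebra_simps scaleR_2)
  then have "(norm ((v - y) + (v - z)))\<^sup>2 = 4 * (norm (v - (1/2) *\<^sub>R (y + z)))\<^sup>2"
    by (simp add: power_mult_distrib)
  also have "\<dots> \<ge> 4 * d\<^sup>2"
    using assms by (simp add: power_mono)
  finally have "4 * d\<^sup>2 \<le> (norm ((v - y) + (v - z)))\<^sup>2" .
  moreover have "(norm (y - z))\<^sup>2 + (norm ((v - y) + (v - z)))\<^sup>2
      = 2 * (norm (v - y))\<^sup>2 + 2 * (norm (v - z))\<^sup>2"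
    by (simp only: power2_norm_eq_inner) (simp add: algebra_simps inner_commute)
  ultimately show ?thesis
    by (simp add: dist_norm)
qed

lemma closest_point_exists_complete:
  fixes M :: "'a::{real_inner, complete_space} set"
  assumes "closed M" "convex M" "M \<noteq> {}"
  shows "\<exists>p\<in>M. \<forall>y\<in>M. norm (v - p) \<le> norm (v - y)"
proof -
  define d where "d = Inf ((\<lambda>y. norm (v - y)) ` M)"
  have bdd: "bdd_below ((\<lambda>y. norm (v - y)) ` M)"
    by (rule bdd_belowI[of _ 0]) auto
  have d_le: "d \<le> norm (v - y)" if "y \<in> M" for y
    unfolding d_def using bdd that by (auto intro: cInf_lower)
  have d_nonneg: "d \<ge> 0"
    unfolding d_def using \<open>M \<noteq> {}\<close> by (auto intro: cInf_greatest)
  have "\<exists>y\<in>M. norm (v - y) < d + 1 / real (Suc n)" for n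
    using cInf_lessD[of "(\<lambda>y. norm (v - y)) ` M" "d + 1 / real (Suc n)"] \<open>M \<noteq> {}\<close>
    unfolding d_def by auto
  then obtain y where yM: "\<And>n. y n \<in> M" and y_lt: "\<And>n. norm (v - y n) < d + 1 / real (Suc n)"
    by metis
  define g where "g n = 2 * ((d + 1 / real (Suc n))\<^sup>2 - d\<^sup>2)" for n
  have sq_le: "2 * (norm (v - y n))\<^sup>2 \<le> g n + 2 * d\<^sup>2" for n
    using power_strict_mono[OF y_lt[of n] norm_ge_zero, of 2] unfolding g_def by simp
  have "(dist (y m) (y n))\<^sup>2 \<le> g m + g n" for m n
  proof -
    have "d \<le> norm (v - (1/2) *\<^sub>R (y m + y n))"
      using d_le convexD[OF \<open>convex M\<close> yM yM, of "1/2" "1/2"] by (simp add: scaleR_add_right)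
    then show ?thesis
      using parallelogram_dist_sq_le[OF _ d_nonneg] sq_le[of m] sq_le[of n] by fastforce
  qed
  moreover have "g \<longlonglongrightarrow> 2 * ((d + 0)\<^sup>2 - d\<^sup>2)"
    unfolding g_def by (intro tendsto_intros LIMSEQ_Suc[OF lim_inverse_n'[unfolded inverse_eq_divide]])
  ultimately have "Cauchy y"
    by (intro Cauchy_if_dist_sq_le[of g]) simp_all
  then obtain p where yp: "y \<longlonglongrightarrow> p"
    using Cauchy_convergent_iff convergent_def by blast
  have "p \<in> M"
    using \<open>closed M\<close> yM yp closed_sequentially by blast
  have "(\<lambda>n. norm (v - y n)) \<longlonglongrightarrow> norm (v - p)"
    by (intro tendsto_intros yp)
  moreover have "(\<lambda>n. d + 1 / real (Suc n)) \<longlonglongrightarrow> d + 0"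
    by (intro tendsto_intros LIMSEQ_Suc[OF lim_inverse_n'[unfolded inverse_eq_divide]])
  ultimately have "norm (v - p) \<le> d + 0"
    using y_lt by (intro LIMSEQ_le) (auto intro: less_imp_le)
  then show ?thesis
    using \<open>p \<in> M\<close> d_le by force
qed

lemma inner_eq_0_if_norm_minimal_on_line:
  fixes a b :: "'a::real_inner"
  assumes "\<And>t. norm a \<le> norm (a - t *\<^sub>R b)"
  shows "inner a b = 0"
proof (cases "b = 0")
  case False
  define t where "t = inner a b / (norm b)\<^sup>2"
  have "(norm a)\<^sup>2 \<le> (norm (a - t *\<^sub>R b))\<^sup>2"
    using assms[of t] by (simp add: power_mono)
  also have "\<dots> = (norm a)\<^sup>2 - (inner a b)\<^sup>2 / (norm b)\<^sup>2"
    using False unfolding t_def power2_norm_eq_inner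
    by (simp add: inner_diff_left inner_diff_right inner_commute[of b a] power2_eq_square field_simps)
  finally show ?thesis
    using False by (simp add: divide_le_0_iff)
qed simp

definition csubspace :: "'a::chilbert set \<Rightarrow> bool" where
  "csubspace M \<longleftrightarrow> 0 \<in> M \<and> (\<forall>x\<in>M. \<forall>y\<in>M. x + y \<in> M) \<and> (\<forall>c. \<forall>x\<in>M. c *\<^sub>C x \<in> M)"

lemma csubspace_imp_subspace: "csubspace M \<Longrightarrow> subspace M"
  unfolding csubspace_def subspace_def by (metis scaleC_of_real)

lemma csubspace_diff: "csubspace M \<Longrightarrow> x \<in> M \<Longrightarrow> y \<in> M \<Longrightarrow> x - y \<in> M"
  using csubspace_imp_subspace subspace_diff by blast

lemma orthogonal_decomposition_exists:
  fixes M :: "'a::chilbert set"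
  assumes "closed M" "csubspace M"
  shows "\<exists>p\<in>M. \<forall>z\<in>M. cinner (v - p) z = 0"
proof -
  have "subspace M"
    using \<open>csubspace M\<close> by (rule csubspace_imp_subspace)
  then obtain p where "p \<in> M" and p_min: "\<forall>y\<in>M. norm (v - p) \<le> norm (v - y)"
    using closest_point_exists_complete[OF \<open>closed M\<close> subspace_imp_convex] subspace_0 by blast
  have inner_0: "inner (v - p) z = 0" if "z \<in> M" for z
  proof (rule inner_eq_0_if_norm_minimal_on_line)
    fix t
    have "p + t *\<^sub>R z \<in> M"
      using \<open>subspace M\<close> \<open>p \<in> M\<close> that by (simp add: subspace_add subspace_scale)
    then show "norm (v - p) \<le> norm (v - p - t *\<^sub>R z)"
      using p_min by (metis diff_diff_eq)
  qed
  \<comment> \<open>\<open>Im (cinner u z) = inner u (\<i> *\<^sub>C z)\<close>\<close>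
  have "cinner (v - p) z = 0" if "z \<in> M" for z
    using inner_0[OF that] inner_0[of "\<i> *\<^sub>C z"] \<open>csubspace M\<close> that
    unfolding csubspace_def by (simp add: cinner_eq_Complex_inner complex_eq_iff)
  with \<open>p \<in> M\<close> show ?thesis
    by blast
qed

lemma orthogonal_decomposition_unique:
  fixes M :: "'a::chilbert set"
  assumes "csubspace M"
    and "p \<in> M" "\<forall>z\<in>M. cinner (v - p) z = 0"
    and "q \<in> M" "\<forall>z\<in>M. cinner (v - q) z = 0"
  shows "p = q"
proof -
  have "q - p \<in> M"
    using assms by (simp add: csubspace_diff)
  then have "cinner ((v - p) - (v - q)) (q - p) = 0"
    using assms by (simp only: cinner_diff_left) simp
  then show ?thesis
    by simp
qed

lemma
  fixes M :: "'a::chilbert set"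
  assumes "closed M" "csubspace M"
  shows cproj_mem: "cproj M v \<in> M"
    and cproj_orthogonal: "z \<in> M \<Longrightarrow> cinner (v - cproj M v) z = 0"
proof -
  obtain p where p: "p \<in> M \<and> (\<forall>z\<in>M. cinner (v - p) z = 0)"
    using orthogonal_decomposition_exists[OF assms] by blast
  have "cproj M v = p"
    unfolding cproj_def
    by (rule the_equality, rule p) (use orthogonal_decomposition_unique[OF assms(2)] p in blast)
  with p show "cproj M v \<in> M" "z \<in> M \<Longrightarrow> cinner (v - cproj M v) z = 0"
    by auto
qed

lemma cproj_diff:
  fixes M :: "'a::chilbert set"
  assumes "closed M" "csubspace M"
  shows "cproj M (a - b) = cproj M a - cproj M b"
proof (rule orthogonal_decomposition_unique[OF assms(2)])
  show "cproj M a - cproj M b \<in> M"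
    using assms by (simp add: cproj_mem csubspace_diff)
  show "\<forall>z\<in>M. cinner ((a - b) - (cproj M a - cproj M b)) z = 0"
  proof
    fix z
    assume "z \<in> M"
    have "(a - b) - (cproj M a - cproj M b) = (a - cproj M a) - (b - cproj M b)"
      by simp
    then show "cinner ((a - b) - (cproj M a - cproj M b)) z = 0"
      using cproj_orthogonal[OF assms \<open>z \<in> M\<close>] by (simp add: cinner_diff_left)
  qed
qed (use assms cproj_mem cproj_orthogonal in auto)

lemma closed_corth: "closed (corth (M::'a::chilbert set))"
proof -
  have "corth M = (\<Inter>x\<in>M. {y. cinner x y = 0})"
    unfolding corth_def by auto
  moreover have "closed {y::'a. cinner x y = 0}" for x
    by (intro closed_Collect_eq continuous_intros)
  ultimately show ?thesis
    by auto
qed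

lemma csubspace_corth: "csubspace (corth (M::'a::chilbert set))"
  unfolding csubspace_def corth_def by (simp add: cinner_add_right cinner_scaleC_right)


section \<open>Linear relations\<close>

lemma lin_rel_zero: "lin_rel T \<Longrightarrow> (0, 0) \<in> T"
  unfolding lin_rel_def by blast

lemma lin_rel_add: "lin_rel T \<Longrightarrow> (x, f) \<in> T \<Longrightarrow> (y, g) \<in> T \<Longrightarrow> (x + y, f + g) \<in> T"
  unfolding lin_rel_def by blast

lemma lin_rel_scaleC: "lin_rel T \<Longrightarrow> (x, f) \<in> T \<Longrightarrow> (c *\<^sub>C x, c *\<^sub>C f) \<in> T"
  unfolding lin_rel_def by blast

lemma lin_rel_diff: "lin_rel T \<Longrightarrow> (x, f) \<in> T \<Longrightarrow> (y, g) \<in> T \<Longrightarrow> (x - y, f - g) \<in> T"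
  using lin_rel_add[of T x f "-y" "-g"] lin_rel_scaleC[of T y g "-1"] by (simp add: scaleC_minus_one)

lemma rsumI: "(x, f) \<in> S \<Longrightarrow> (x, g) \<in> A \<Longrightarrow> (x, f + g) \<in> rsum S A"
  unfolding rsum_def by blast

lemma rsumE:
  assumes "(x, h) \<in> rsum S A"
  obtains f g where "(x, f) \<in> S" "(x, g) \<in> A" "h = f + g"
  using assms unfolding rsum_def by blast

lemma lin_rel_rsum:
  assumes S: "lin_rel S" and A: "lin_rel A"
  shows "lin_rel (rsum S A)"
  unfolding lin_rel_def
proof (intro conjI allI impI)
  show "(0, 0) \<in> rsum S A"
    using rsumI[OF lin_rel_zero[OF S] lin_rel_zero[OF A]] by simp
next
  fix x h y k
  assume "(x, h) \<in> rsum S A \<and> (y, k) \<in> rsum S A"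
  then obtain f g f' g' where "(x, f) \<in> S" "(x, g) \<in> A" "h = f + g"
    and "(y, f') \<in> S" "(y, g') \<in> A" "k = f' + g'"
    by (meson rsumE)
  moreover from this have "(x + y, (f + f') + (g + g')) \<in> rsum S A"
    by (intro rsumI lin_rel_add[OF S] lin_rel_add[OF A])
  ultimately show "(x + y, h + k) \<in> rsum S A"
    by (simp add: algebra_simps)
next
  fix c x h
  assume "(x, h) \<in> rsum S A"
  then obtain f g where "(x, f) \<in> S" "(x, g) \<in> A" "h = f + g"
    by (rule rsumE)
  then show "(c *\<^sub>C x, c *\<^sub>C h) \<in> rsum S A"
    using rsumI[OF lin_rel_scaleC[OF S] lin_rel_scaleC[OF A]] by (simp add: scaleC_add_right)
qed

lemma closed_radj: "closed (radj (T::('a::chilbert \<times> 'a) set))"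
proof -
  have "radj T = (\<Inter>q\<in>T. {p. cinner (snd p) (fst q) = cinner (fst p) (snd q)})"
    unfolding radj_def by fastforce
  moreover have "closed {p::'a \<times> 'a. cinner (snd p) (fst q) = cinner (fst p) (snd q)}" for q
    by (intro closed_Collect_eq continuous_intros)
  ultimately show ?thesis
    by auto
qed

lemma selfadjoint_rel_imp_hermitian_rel: "selfadjoint_rel T \<Longrightarrow> hermitian_rel T"
  unfolding selfadjoint_rel_def hermitian_rel_def by simp

lemma selfadjoint_rel_imp_closed: "selfadjoint_rel T \<Longrightarrow> closed T"
  unfolding selfadjoint_rel_def by (metis closed_radj)

lemma hermitian_rel_cinner:
  "hermitian_rel T \<Longrightarrow> (x, f) \<in> T \<Longrightarrow> (y, g) \<in> T \<Longrightarrow> cinner g x = cinner y f"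
  unfolding hermitian_rel_def radj_def by blast

lemma hermitian_rel_cinner_rimg0:
  "hermitian_rel T \<Longrightarrow> (0, p) \<in> T \<Longrightarrow> (x, f) \<in> T \<Longrightarrow> cinner p x = 0"
  using hermitian_rel_cinner[of T x f 0 p] by simp

lemma csubspace_rimg0: "lin_rel T \<Longrightarrow> csubspace (rimg T 0)"
  unfolding csubspace_def rimg_def
  using lin_rel_zero lin_rel_add[of T 0 _ 0] lin_rel_scaleC[of T 0] by fastforce

lemma closed_rimg0: "closed T \<Longrightarrow> closed (rimg (T::('a::real_normed_vector \<times> 'a) set) 0)"
proof -
  assume "closed T"
  have "rimg T 0 = (\<lambda>g. (0, g)) -` T"
    unfolding rimg_def by auto
  moreover have "closed ((\<lambda>g::'a. (0::'a, g)) -` T)"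
    by (rule continuous_closed_vimage[OF \<open>closed T\<close>]) (intro continuous_intros)
  ultimately show ?thesis
    by simp
qed

lemma rsing_iff: "(x, f) \<in> rsing T \<longleftrightarrow> (x, f) \<in> T \<and> (\<forall>g. (0, g) \<in> T \<longrightarrow> cinner f g = 0)"
  unfolding rsing_def rinf_def by auto

lemma rsing_unique:
  assumes "lin_rel T" "(x, f) \<in> rsing T" "(x, f') \<in> rsing T"
  shows "f = f'"
proof -
  have "(0, f - f') \<in> T"
    using lin_rel_diff[OF assms(1)] assms(2,3) rsing_iff by (metis diff_self)
  then have "cinner f (f - f') = 0" "cinner f' (f - f') = 0"
    using assms rsing_iff by blast+
  then have "cinner (f - f') (f - f') = 0"
    by (simp add: cinner_diff_left)
  then show ?thesis
    by simp
qed

text \<open>The operator part at \<open>x\<close> is \<open>f\<close> minus the projection of \<open>f\<close> onto \<open>T(0)\<close>, for any \<open>(x, f) \<in> T\<close>.\<close>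

lemma opart_rsing:
  assumes "lin_rel T" "closed T" "x \<in> rdom T"
  shows "(x, opart T x) \<in> rsing T"
proof -
  obtain f where f: "(x, f) \<in> T"
    using \<open>x \<in> rdom T\<close> unfolding rdom_def by blast
  define M where "M = rimg T 0"
  have M: "closed M" "csubspace M"
    unfolding M_def using closed_rimg0 csubspace_rimg0 assms by auto
  have "(0, cproj M f) \<in> T"
    using cproj_mem[OF M] unfolding M_def rimg_def by simp
  then have "(x - 0, f - cproj M f) \<in> T"
    by (rule lin_rel_diff[OF \<open>lin_rel T\<close> f])
  moreover have "\<forall>g. (0, g) \<in> T \<longrightarrow> cinner (f - cproj M f) g = 0"
    using cproj_orthogonal[OF M] unfolding M_def rimg_def by simp
  ultimately have f_rsing: "(x, f - cproj M f) \<in> rsing T"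
    by (simp add: rsing_iff)
  have "opart T x = f - cproj M f"
    unfolding opart_def
    by (rule the_equality, rule f_rsing) (use rsing_unique[OF \<open>lin_rel T\<close> _ f_rsing] in blast)
  with f_rsing show ?thesis
    by simp
qed

lemma opart_mem: "lin_rel T \<Longrightarrow> closed T \<Longrightarrow> x \<in> rdom T \<Longrightarrow> (x, opart T x) \<in> T"
  using opart_rsing rsing_iff by blast

lemma opart_orthogonal:
  "lin_rel T \<Longrightarrow> closed T \<Longrightarrow> x \<in> rdom T \<Longrightarrow> (0, g) \<in> T \<Longrightarrow> cinner (opart T x) g = 0"
  using opart_rsing rsing_iff by blast

lemma opart_diff:
  assumes "lin_rel T" "closed T" "x \<in> rdom T" "y \<in> rdom T"
  shows "opart T (x - y) = opart T x - opart T y"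
proof -
  have "(x - y, opart T x - opart T y) \<in> T"
    using lin_rel_diff[OF assms(1) opart_mem[OF assms(1,2,3)] opart_mem[OF assms(1,2,4)]] .
  moreover have "\<forall>g. (0, g) \<in> T \<longrightarrow> cinner (opart T x - opart T y) g = 0"
    using opart_orthogonal[OF assms(1,2,3)] opart_orthogonal[OF assms(1,2,4)]
    by (simp add: cinner_diff_left)
  ultimately have xy_rsing: "(x - y, opart T x - opart T y) \<in> rsing T"
    by (simp add: rsing_iff)
  then have "x - y \<in> rdom T"
    unfolding rsing_iff rdom_def by blast
  then show ?thesis
    using rsing_unique[OF assms(1) opart_rsing[OF assms(1,2)] xy_rsing] by blast
qed


section \<open>Ranges of shifted Hermitian relations\<close>

definition shifted_ran :: "('a::chilbert \<times> 'a) set \<Rightarrow> complex \<Rightarrow> 'a set" where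
  "shifted_ran T c = {f - c *\<^sub>C x | x f. (x, f) \<in> T}"

lemma hermitian_rel_norm_shift:
  assumes "hermitian_rel T" "(x, f) \<in> T" "Re c = 0"
  shows "(norm (f - c *\<^sub>C x))\<^sup>2 = (norm f)\<^sup>2 + (cmod c)\<^sup>2 * (norm x)\<^sup>2"
proof -
  have "cnj (cinner f x) = cinner f x"
    using hermitian_rel_cinner[OF assms(1,2,2)] cinner_commute[of x f] by simp
  then have "Im (cinner f x) = 0"
    by (metis Reals_cnj_iff complex_is_Real_iff)
  then have "Re (cinner f (c *\<^sub>C x)) = 0"
    using \<open>Re c = 0\<close> by (simp add: cinner_scaleC_right)
  then show ?thesis
    by (simp add: norm_diff_sq norm_scaleC power_mult_distrib)
qed

lemma hermitian_rel_norm_shift_ge: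
  assumes "hermitian_rel T" "(x, f) \<in> T" "Re c = 0"
  shows "norm f \<le> norm (f - c *\<^sub>C x)" "cmod c * norm x \<le> norm (f - c *\<^sub>C x)"
proof -
  have "(norm (f - c *\<^sub>C x))\<^sup>2 = (norm f)\<^sup>2 + (cmod c * norm x)\<^sup>2"
    using hermitian_rel_norm_shift[OF assms] by (simp add: power_mult_distrib)
  then have "(norm f)\<^sup>2 \<le> (norm (f - c *\<^sub>C x))\<^sup>2" "(cmod c * norm x)\<^sup>2 \<le> (norm (f - c *\<^sub>C x))\<^sup>2"
    by simp_all
  then show "norm f \<le> norm (f - c *\<^sub>C x)" "cmod c * norm x \<le> norm (f - c *\<^sub>C x)"
    by (simp_all add: power2_le_imp_le[OF _ norm_ge_zero])
qed

lemma Cauchy_if_dist_le_Cauchy: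
  fixes a :: "nat \<Rightarrow> 'a::metric_space" and b :: "nat \<Rightarrow> 'b::metric_space"
  assumes "Cauchy b" "k > 0" "\<And>m n. k * dist (a m) (a n) \<le> dist (b m) (b n)"
  shows "Cauchy a"
proof (rule metric_CauchyI)
  fix \<epsilon> :: real
  assume "\<epsilon> > 0"
  then obtain N where N: "\<forall>m\<ge>N. \<forall>n\<ge>N. dist (b m) (b n) < k * \<epsilon>"
    using metric_CauchyD[OF \<open>Cauchy b\<close>, of "k * \<epsilon>"] \<open>k > 0\<close> by auto
  have "dist (a m) (a n) < \<epsilon>" if "m \<ge> N" "n \<ge> N" for m n
    using N that assms(3)[of m n] \<open>k > 0\<close> by (smt (verit) mult_less_cancel_left_pos)
  then show "\<exists>N. \<forall>m\<ge>N. \<forall>n\<ge>N. dist (a m) (a n) < \<epsilon>"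
    by blast
qed

lemma closed_shifted_ran:
  fixes T :: "('a::chilbert \<times> 'a) set"
  assumes T: "lin_rel T" "closed T" "hermitian_rel T" and c: "Re c = 0" "c \<noteq> 0"
  shows "closed (shifted_ran T c)"
  unfolding closed_sequential_limits
proof (intro allI impI, elim conjE)
  fix w l
  assume "\<forall>n. w n \<in> shifted_ran T c" and wl: "w \<longlonglongrightarrow> l"
  then have "\<forall>n. \<exists>x f. (x, f) \<in> T \<and> w n = f - c *\<^sub>C x"
    unfolding shifted_ran_def by blast
  then obtain x f where xf: "\<And>n. (x n, f n) \<in> T" and w: "\<And>n. w n = f n - c *\<^sub>C x n"
    by metis
  have "w m - w n = (f m - f n) - c *\<^sub>C (x m - x n)" for m n
    by (simp add: w scaleC_diff_right)
  then have "1 * dist (f m) (f n) \<le> dist (w m) (w n)" "cmod c * dist (x m) (x n) \<le> dist (w m) (w n)"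
    for m n
    using hermitian_rel_norm_shift_ge[OF T(3) lin_rel_diff[OF T(1) xf xf] c(1), of m n]
    by (simp_all add: dist_norm)
  moreover have "Cauchy w"
    using wl by (rule LIMSEQ_imp_Cauchy)
  ultimately have "Cauchy f" "Cauchy x"
    using Cauchy_if_dist_le_Cauchy[of w 1 f] Cauchy_if_dist_le_Cauchy[of w "cmod c" x] c(2)
    by simp_all
  then obtain y g where xy: "x \<longlonglongrightarrow> y" and fg: "f \<longlonglongrightarrow> g"
    using Cauchy_convergent_iff convergent_def by metis
  have "(y, g) \<in> T"
    by (rule closed_sequentially[OF T(2) _ tendsto_Pair[OF xy fg]]) (simp add: xf)
  moreover have "w \<longlonglongrightarrow> g - c *\<^sub>C y"
    unfolding w by (intro tendsto_diff fg bounded_linear.tendsto[OF bounded_linear_scaleC] xy)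
  then have "l = g - c *\<^sub>C y"
    using wl LIMSEQ_unique by blast
  ultimately show "l \<in> shifted_ran T c"
    unfolding shifted_ran_def by blast
qed

lemma csubspace_shifted_ran:
  assumes T: "lin_rel T"
  shows "csubspace (shifted_ran T c)"
  unfolding csubspace_def
proof (intro conjI ballI allI)
  have "(0::'a) = 0 - c *\<^sub>C 0"
    by simp
  then show "0 \<in> shifted_ran T c"
    using lin_rel_zero[OF T] unfolding shifted_ran_def by blast
next
  fix u w
  assume "u \<in> shifted_ran T c" "w \<in> shifted_ran T c"
  then obtain x f y g where "(x, f) \<in> T" "(y, g) \<in> T" "u = f - c *\<^sub>C x" "w = g - c *\<^sub>C y"
    unfolding shifted_ran_def by blast
  moreover from this have "(x + y, f + g) \<in> T"
    using lin_rel_add[OF T] by blast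
  ultimately show "u + w \<in> shifted_ran T c"
    unfolding shifted_ran_def by (force simp: scaleC_add_right)
next
  fix d u
  assume "u \<in> shifted_ran T c"
  then obtain x f where "(x, f) \<in> T" "u = f - c *\<^sub>C x"
    unfolding shifted_ran_def by blast
  moreover from this have "(d *\<^sub>C x, d *\<^sub>C f) \<in> T"
    using lin_rel_scaleC[OF T] by blast
  ultimately show "d *\<^sub>C u \<in> shifted_ran T c"
    unfolding shifted_ran_def
    by (force simp: scaleC_diff_right scaleC_scaleC mult.commute)
qed

text \<open>A vector orthogonal to the range of \<open>S - c\<close> is an eigenvector of \<open>S\<^sup>* = S\<close> for \<open>cnj c\<close>,
  which a Hermitian relation cannot have unless \<open>c\<close> is real.\<close>

lemma shifted_ran_selfadjoint:
  fixes S :: "('a::chilbert \<times> 'a) set"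
  assumes S: "lin_rel S" "selfadjoint_rel S" and c: "Re c = 0" "c \<noteq> 0"
  shows "shifted_ran S c = UNIV"
proof -
  have herm: "hermitian_rel S"
    using S(2) by (rule selfadjoint_rel_imp_hermitian_rel)
  have R: "closed (shifted_ran S c)" "csubspace (shifted_ran S c)"
    using closed_shifted_ran[OF S(1) selfadjoint_rel_imp_closed[OF S(2)] herm c]
      csubspace_shifted_ran[OF S(1)] by auto
  have "v \<in> shifted_ran S c" for v
  proof -
    obtain p where p: "p \<in> shifted_ran S c" "\<forall>u\<in>shifted_ran S c. cinner (v - p) u = 0"
      using orthogonal_decomposition_exists[OF R] by blast
    define z where "z = v - p"
    have "(z, cnj c *\<^sub>C z) \<in> radj S"
      unfolding radj_def
    proof clarify
      fix x f
      assume "(x, f) \<in> S"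
      then have "cinner z (f - c *\<^sub>C x) = 0"
        using p(2) unfolding z_def shifted_ran_def by blast
      then show "cinner (cnj c *\<^sub>C z) x = cinner z f"
        by (simp add: cinner_diff_right cinner_scaleC_right cinner_scaleC_left)
    qed
    then have "(z, cnj c *\<^sub>C z) \<in> S"
      using S(2) unfolding selfadjoint_rel_def by simp
    then have "(cnj c - c) * cinner z z = 0"
      using hermitian_rel_cinner[OF herm] by (fastforce simp: cinner_scaleC_left cinner_scaleC_right algebra_simps)
    moreover have "cnj c \<noteq> c"
      using c by (simp add: complex_eq_iff)
    ultimately have "z = 0"
      by simp
    with p(1) show ?thesis
      unfolding z_def by simp
  qed
  then show ?thesis
    by blast
qed

lemma hermitian_rel_shift_bounds:
  fixes T :: "('a::chilbert \<times> 'a) set"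
  assumes T: "lin_rel T" "closed T" "hermitian_rel T" and xf: "(x, f) \<in> T" and "Re c = 0"
  shows "norm (opart T x) \<le> norm (f - c *\<^sub>C x)" "cmod c * norm x \<le> norm (f - c *\<^sub>C x)"
proof -
  have "x \<in> rdom T"
    using xf unfolding rdom_def by blast
  define s where "s = opart T x"
  define p where "p = f - s"
  have sT: "(x, s) \<in> T"
    unfolding s_def using opart_mem[OF T(1,2) \<open>x \<in> rdom T\<close>] .
  have pT: "(0, p) \<in> T"
    unfolding p_def using lin_rel_diff[OF T(1) xf sT] by simp
  \<comment> \<open>\<open>p \<in> T(0)\<close> is orthogonal to both \<open>s\<close> and \<open>x \<in> D(T)\<close>\<close>
  have "cinner s p = 0"
    unfolding s_def using opart_orthogonal[OF T(1,2) \<open>x \<in> rdom T\<close> pT] .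
  moreover have "cinner x p = 0"
    using hermitian_rel_cinner_rimg0[OF T(3) pT xf] cinner_commute[of x p] by simp
  ultimately have "cinner (s - c *\<^sub>C x) p = 0"
    by (simp add: cinner_diff_left cinner_scaleC_left)
  then have "(norm (f - c *\<^sub>C x))\<^sup>2 = (norm (s - c *\<^sub>C x))\<^sup>2 + (norm p)\<^sup>2"
    using norm_add_sq[of "s - c *\<^sub>C x" p] by (simp add: p_def)
  then have "norm (s - c *\<^sub>C x) \<le> norm (f - c *\<^sub>C x)"
    by (simp add: power2_le_imp_le[OF _ norm_ge_zero])
  then show "norm (opart T x) \<le> norm (f - c *\<^sub>C x)" "cmod c * norm x \<le> norm (f - c *\<^sub>C x)"
    using hermitian_rel_norm_shift_ge[OF T(3) sT \<open>Re c = 0\<close>] unfolding s_def by linarith+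
qed

lemma hermitian_rel_rel_bound_le_shift:
  fixes T :: "('a::chilbert \<times> 'a) set"
  assumes T: "lin_rel T" "closed T" "hermitian_rel T" and xf: "(x, f) \<in> T"
    and c: "Re c = 0" "c \<noteq> 0" and ab: "0 \<le> a" "0 \<le> b"
  shows "a * norm (opart T x) + b * norm x \<le> (a + b / cmod c) * norm (f - c *\<^sub>C x)"
proof -
  note bounds = hermitian_rel_shift_bounds[OF T xf c(1)]
  have "a * norm (opart T x) + b * norm x \<le> a * norm (f - c *\<^sub>C x) + b * (norm (f - c *\<^sub>C x) / cmod c)"
    using bounds ab c(2) by (intro add_mono mult_left_mono) (simp_all add: field_simps)
  then show ?thesis
    by (simp add: algebra_simps)
qed

lemma selfadjoint_rel_if_shifted_ran:
  fixes T :: "('a::chilbert \<times> 'a) set"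
  assumes herm: "hermitian_rel T"
    and ran: "shifted_ran T c = UNIV" "shifted_ran T (cnj c) = UNIV"
  shows "selfadjoint_rel T"
  unfolding selfadjoint_rel_def
proof
  show "T \<subseteq> radj T"
    using herm unfolding hermitian_rel_def .
  show "radj T \<subseteq> T"
  proof clarify
    fix y g
    assume yg: "(y, g) \<in> radj T"
    have "g - c *\<^sub>C y \<in> shifted_ran T c"
      using ran(1) by simp
    then obtain x f where xf: "(x, f) \<in> T" and "g - c *\<^sub>C y = f - c *\<^sub>C x"
      unfolding shifted_ran_def by blast
    define z where "z = y - x"
    have gf: "g - f = c *\<^sub>C z"
      unfolding z_def scaleC_diff_right using \<open>g - c *\<^sub>C y = f - c *\<^sub>C x\<close>
      by (simp add: algebra_simps)
    \<comment> \<open>\<open>(z, c z) \<in> T\<^sup>*\<close>, and \<open>z\<close> is orthogonal to the range of \<open>T - cnj c\<close>\<close>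
    have z_adj: "cinner (c *\<^sub>C z) u = cinner z h" if "(u, h) \<in> T" for u h
    proof -
      have "cinner g u = cinner y h" "cinner f u = cinner x h"
        using yg herm xf that unfolding hermitian_rel_def radj_def by blast+
      then have "cinner (g - f) u = cinner (y - x) h"
        by (simp add: cinner_diff_left)
      then show ?thesis
        by (simp only: gf z_def)
    qed
    have "z \<in> shifted_ran T (cnj c)"
      using ran(2) by simp
    then obtain u h where uh: "(u, h) \<in> T" and "h - cnj c *\<^sub>C u = z"
      unfolding shifted_ran_def by blast
    then have "cinner z z = cinner z h - c * cinner z u"
      by (metis cinner_diff_right cinner_scaleC_right complex_cnj_cnj)
    also have "\<dots> = 0"
      using z_adj[OF uh] by (simp add: cinner_scaleC_left)
    finally have "z = 0"
      by simp
    then show "(y, g) \<in> T"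
      using gf xf unfolding z_def by simp
  qed
qed


section \<open>Relatively bounded perturbations\<close>

lemma rel_bound_less_obtains:
  assumes "rel_bounded U DU V DV" "rel_bound U V DV < r"
  obtains a b where "0 \<le> a" "a < r" "0 \<le> b"
    "\<And>x. x \<in> DV \<Longrightarrow> norm (U x) \<le> a * norm (V x) + b * norm x"
proof -
  define \<Omega> where "\<Omega> = {a. a \<ge> 0 \<and> (\<exists>b\<ge>0. \<forall>x\<in>DV. norm (U x) \<le> a * norm (V x) + b * norm x)}"
  obtain k where "k \<ge> 0" "\<forall>x\<in>DV. norm (U x) \<le> k * (norm x + norm (V x))"
    using assms(1) unfolding rel_bounded_def by blast
  then have "k \<in> \<Omega>"
    unfolding \<Omega>_def by (auto simp: algebra_simps intro!: exI[of _ k])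
  moreover have "Inf \<Omega> < r"
    using assms(2) unfolding rel_bound_def \<Omega>_def .
  ultimately obtain a where "a \<in> \<Omega>" "a < r"
    using cInf_lessD by blast
  then show ?thesis
    using that unfolding \<Omega>_def by blast
qed

lemma shifted_ran_perturbation:
  fixes T :: "('a::chilbert \<times> 'a) set" and U :: "'a \<Rightarrow> 'a"
  assumes T: "lin_rel T" "closed T" "hermitian_rel T"
    and c: "Re c = 0" "c \<noteq> 0" and onto: "shifted_ran T c = UNIV"
    and U_diff: "\<And>x y. x \<in> rdom T \<Longrightarrow> y \<in> rdom T \<Longrightarrow> U (x - y) = U x - U y"
    and U_bound: "\<And>x. x \<in> rdom T \<Longrightarrow> norm (U x) \<le> a * norm (opart T x) + b * norm x"
    and ab: "0 \<le> a" "0 \<le> b" "a + b / cmod c < 1"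
  shows "\<exists>x f. (x, f) \<in> T \<and> f - c *\<^sub>C x + U x = w"
proof -
  define R where "R v = (SOME x. \<exists>f. (x, f) \<in> T \<and> f - c *\<^sub>C x = v)" for v
  have R: "\<exists>f. (R v, f) \<in> T \<and> f - c *\<^sub>C R v = v" for v
  proof -
    have "v \<in> shifted_ran T c"
      using onto by simp
    then have "\<exists>x f. (x, f) \<in> T \<and> f - c *\<^sub>C x = v"
      unfolding shifted_ran_def by blast
    then show ?thesis
      unfolding R_def by (rule someI_ex)
  qed
  have R_dom: "R v \<in> rdom T" for v
    using R[of v] unfolding rdom_def by blast
  define F where "F v = w - U (R v)" for v
  have "dist (F v) (F v') \<le> (a + b / cmod c) * dist v v'" for v v'
  proof -
    obtain f f' where f: "(R v, f) \<in> T" "f - c *\<^sub>C R v = v"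
      and f': "(R v', f') \<in> T" "f' - c *\<^sub>C R v' = v'"
      using R[of v] R[of v'] by blast
    define x where "x = R v - R v'"
    have xT: "(x, f - f') \<in> T"
      unfolding x_def using lin_rel_diff[OF T(1) f(1) f'(1)] .
    have "(f - f') - c *\<^sub>C x = v - v'"
      unfolding x_def using f(2) f'(2) by (simp add: scaleC_diff_right algebra_simps)
    have "dist (F v) (F v') = norm (U x)"
      unfolding F_def x_def dist_norm using U_diff[OF R_dom R_dom]
      by (metis minus_diff_eq norm_minus_cancel diff_diff_eq2 diff_add_cancel add_diff_cancel_left)
    also have "\<dots> \<le> a * norm (opart T x) + b * norm x"
      using xT U_bound unfolding rdom_def by blast
    also have "\<dots> \<le> (a + b / cmod c) * dist v v'"
      using hermitian_rel_rel_bound_le_shift[OF T xT c ab(1,2)] \<open>(f - f') - c *\<^sub>C x = v - v'\<close>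
      by (simp add: dist_norm)
    finally show ?thesis .
  qed
  then obtain v where "F v = v"
    using banach_fix_type[of "a + b / cmod c" F] ab by (auto simp: c(2))
  moreover obtain f where "(R v, f) \<in> T" "f - c *\<^sub>C R v = v"
    using R[of v] by blast
  ultimately show ?thesis
    unfolding F_def by (metis diff_add_cancel eq_diff_eq)
qed

text \<open>The part \<open>g - Q g\<close> of \<open>g\<close> outside \<open>S(0)\<^sup>\<bottom>\<close> is orthogonal to \<open>D(S)\<close>, hence lies in
  \<open>S\<^sup>*(0) = S(0)\<close>.\<close>

lemma selfadjoint_rel_proj_residual:
  fixes S :: "('a::chilbert \<times> 'a) set"
  assumes "selfadjoint_rel S"
  shows "(0, g - cproj (corth (rimg S 0)) g) \<in> S"
proof -
  define M where "M = corth (rimg S 0)"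
  have M: "closed M" "csubspace M"
    unfolding M_def by (simp_all add: closed_corth csubspace_corth)
  have "(0, g - cproj M g) \<in> radj S"
    unfolding radj_def
  proof clarify
    fix u h
    assume "(u, h) \<in> S"
    then have "u \<in> M"
      using hermitian_rel_cinner_rimg0 selfadjoint_rel_imp_hermitian_rel[OF assms]
      unfolding M_def corth_def rimg_def by blast
    then show "cinner (g - cproj M g) u = cinner 0 h"
      using cproj_orthogonal[OF M] by simp
  qed
  then show ?thesis
    using assms unfolding selfadjoint_rel_def M_def by simp
qed

lemma shifted_ran_rsumI:
  fixes S A :: "('a::chilbert \<times> 'a) set"
  assumes S: "lin_rel S" "selfadjoint_rel S" and xf: "(x, f) \<in> S" and xg: "(x, g) \<in> A"
  shows "f - c *\<^sub>C x + cproj (corth (rimg S 0)) g \<in> shifted_ran (rsum S A) c"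
proof -
  define n where "n = g - cproj (corth (rimg S 0)) g"
  have "(x - 0, f - n) \<in> S"
    unfolding n_def using lin_rel_diff[OF S(1) xf selfadjoint_rel_proj_residual[OF S(2)]] .
  then have "(x, (f - n) + g) \<in> rsum S A"
    using rsumI[OF _ xg] by simp
  moreover have "(f - n) + g - c *\<^sub>C x = f - c *\<^sub>C x + cproj (corth (rimg S 0)) g"
    unfolding n_def by (simp add: algebra_simps)
  ultimately show ?thesis
    unfolding shifted_ran_def by (metis (mono_tags, lifting) mem_Collect_eq)
qed

lemma shifted_ran_rsum:
  fixes S A :: "('a::chilbert \<times> 'a) set"
  assumes S: "lin_rel S" "selfadjoint_rel S" and A: "lin_rel A" "closed A"
    and dom: "rdom S \<subseteq> rdom A" and c: "Re c = 0" "c \<noteq> 0"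
    and bound: "\<And>x. x \<in> rdom S \<Longrightarrow>
      norm (cproj (corth (rimg S 0)) (opart A x)) \<le> a * norm (opart S x) + b * norm x"
    and ab: "0 \<le> a" "0 \<le> b" "a + b / cmod c < 1"
  shows "shifted_ran (rsum S A) c = UNIV"
proof -
  define U where "U x = cproj (corth (rimg S 0)) (opart A x)" for x
  have U_diff: "U (x - y) = U x - U y" if "x \<in> rdom S" "y \<in> rdom S" for x y
    using that dom unfolding U_def
    by (simp add: opart_diff[OF A] cproj_diff[OF closed_corth csubspace_corth] subset_iff)
  have "w \<in> shifted_ran (rsum S A) c" for w
  proof -
    obtain x f where "(x, f) \<in> S" "f - c *\<^sub>C x + U x = w"
      using shifted_ran_perturbation[OF S(1) selfadjoint_rel_imp_closed[OF S(2)]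
          selfadjoint_rel_imp_hermitian_rel[OF S(2)] c shifted_ran_selfadjoint[OF S c]
          U_diff bound[folded U_def] ab]
      by blast
    moreover have "(x, opart A x) \<in> A"
      using opart_mem[OF A] dom \<open>(x, f) \<in> S\<close> unfolding rdom_def by blast
    ultimately show ?thesis
      using shifted_ran_rsumI[OF S] unfolding U_def by blast
  qed
  then show ?thesis
    by blast
qed

theorem theorem4p2:
  fixes S A :: "('a::chilbert \<times> 'a) set"
  assumes "lin_rel S" and "selfadjoint_rel S"
    and "lin_rel A" and "closed A" and "hermitian_rel A"
    and "closed (rsum S A)" and "hermitian_rel (rsum S A)"
    and "rdom S \<subseteq> rdom A"
    and "rel_bounded (\<lambda>x. cproj (corth (rimg S 0)) (opart A x)) (rdom A) (opart S) (rdom S)"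
    and "rel_bound (\<lambda>x. cproj (corth (rimg S 0)) (opart A x)) (opart S) (rdom S) < 1"
  shows "lin_rel (rsum S A) \<and> selfadjoint_rel (rsum S A)"
proof -
  obtain a b where ab: "0 \<le> a" "a < 1" "0 \<le> b"
    and bound: "\<And>x. x \<in> rdom S \<Longrightarrow>
      norm (cproj (corth (rimg S 0)) (opart A x)) \<le> a * norm (opart S x) + b * norm x"
    using rel_bound_less_obtains[OF assms(9,10)] by blast
  define \<mu> where "\<mu> = (b + 1) / (1 - a)"
  have "\<mu> > 0" "a + b / \<mu> < 1"
    using ab unfolding \<mu>_def by (simp_all add: field_simps)
  define c where "c = Complex 0 \<mu>"
  have "Re c = 0" "c \<noteq> 0" "cmod c = \<mu>" "Re (cnj c) = 0" "cnj c \<noteq> 0" "cmod (cnj c) = \<mu>"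
    using \<open>\<mu> > 0\<close> unfolding c_def by (simp_all add: complex_eq_iff cmod_def)
  then have "shifted_ran (rsum S A) c = UNIV" "shifted_ran (rsum S A) (cnj c) = UNIV"
    using shifted_ran_rsum[OF assms(1-4,8) _ _ bound ab(1,3)] \<open>a + b / \<mu> < 1\<close> by simp_all
  then show ?thesis
    using lin_rel_rsum[OF assms(1,3)] selfadjoint_rel_if_shifted_ran[OF assms(7)] by blast
qed

end
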